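(* Let $S=\{0,1,2,\dots\}$, $\lambda,\mu>0$, $\theta=\lambda/\mu$, and let $p^*_t(x,y)$ be the unique transition function on $S$ whose infinitesimal rates are $q(i,i+1)=\lambda$; $q(i,i+k)=0$ for $k\ge 2$; $q(i,i-k)=\mu$ for $i\ge1$, $1\le k\le i$; $q(i,i)=-(\lambda+i\mu)$; all other entries $0$ (equivalently, the minimal solution of the Kolmogorov backward equations for these rates, which is stochastic). For $t\ge0$, $x,n\in S$ define $$R^*_t(\delta_x,n)=\frac{\theta^n}{(\theta+1)_n}+e^{-(\theta+n)\mu t}\sum_{\rho=0}^{n}\frac{(\theta(e^{\mu t}-1))^\rho}{\rho!}\Big(\mathbf 1\{x\ge n-\rho\}-\frac{\theta^{n-\rho}}{(\theta+1)_{n-\rho}}\Big).$$ Then for all $x,y\in S$ and $t\ge0$, $$p^*_t(x,y)=R^*_t(\delta_x,y)-R^*_t(\delta_x,y+1).$$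
   Context: $(a)_n$ is the rising factorial: $(a)_0=1$, $(a)_n=a(a+1)\cdots(a+n-1)$ for $n\ge1$. *)

theory Defs
  imports Complex_Main
begin

definition qrate :: "real \<Rightarrow> real \<Rightarrow> nat \<Rightarrow> nat \<Rightarrow> real" where
  "qrate lam mu i j =
     (if j = Suc i then lam
      else if j < i then mu
      else if j = i then -(lam + real i * mu)
      else 0)"

definition transition_function :: "(real \<Rightarrow> nat \<Rightarrow> nat \<Rightarrow> real) \<Rightarrow> bool" where
  "transition_function P \<longleftrightarrow>
     (\<forall>t\<ge>0. \<forall>x y. P t x y \<ge> 0) \<and>
     (\<forall>t\<ge>0. \<forall>x. summable (P t x) \<and> (\<Sum>y. P t x y) \<le> 1) \<and>
     (\<forall>x y. P 0 x y = (if x = y then 1 else 0)) \<and>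
     (\<forall>s\<ge>0. \<forall>t\<ge>0. \<forall>x y. P (s + t) x y = (\<Sum>k. P s x k * P t k y)) \<and>
     (\<forall>x. ((\<lambda>t. P t x x) \<longlongrightarrow> 1) (at_right 0))"

definition has_qmatrix :: "(real \<Rightarrow> nat \<Rightarrow> nat \<Rightarrow> real) \<Rightarrow> (nat \<Rightarrow> nat \<Rightarrow> real) \<Rightarrow> bool" where
  "has_qmatrix P q \<longleftrightarrow>
     (\<forall>x y. ((\<lambda>t. P t x y) has_real_derivative q x y) (at_right 0))"

definition Rstar :: "real \<Rightarrow> real \<Rightarrow> real \<Rightarrow> nat \<Rightarrow> nat \<Rightarrow> real" where
  "Rstar \<theta> mu t x n =
     \<theta> ^ n / pochhammer (\<theta> + 1) n
     + exp (-(\<theta> + real n) * mu * t) *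
       (\<Sum>\<rho>=0..n. (\<theta> * (exp (mu * t) - 1)) ^ \<rho> / fact \<rho> *
          ((if x \<ge> n - \<rho> then 1 else 0) - \<theta> ^ (n - \<rho>) / pochhammer (\<theta> + 1) (n - \<rho>)))"

end

theory Submission
  imports Defs "HOL-Analysis.Analysis"
begin

(* Fix n and put F t x = P_t(x, {0..n-1}). Both F and 1 - R*_t(delta_x, n) are bounded solutions of
   the backward equation d/dt u = Q u with the initial value 1{x < n}: for F this follows from the
   Chapman-Kolmogorov equation, because every row of q is conservative and finitely supported, and
   for R* it is a direct computation. Bounded solutions are determined by their initial values: the
   barrier eps * exp ((lam + 1) t) * 2^x exceeds a bounded solution at all large x, and at a state
   where a solution first touches it, Q pushes the solution down relative to the barrier. Hence
   F = 1 - R*, and P_t(x, y) is the difference of two such tails. *)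

section \<open>The generator of the chain\<close>

definition generator :: "real \<Rightarrow> real \<Rightarrow> (nat \<Rightarrow> real) \<Rightarrow> nat \<Rightarrow> real" where
  "generator lam mu f x = lam * f (Suc x) + mu * (\<Sum>k<x. f k) - (lam + real x * mu) * f x"

lemma sum_qrate_mult: "(\<Sum>k<Suc (Suc x). qrate lam mu x k * f k) = generator lam mu f x"
proof -
  have "(\<Sum>k<x. qrate lam mu x k * f k) = mu * (\<Sum>k<x. f k)"
    by (simp add: qrate_def sum_distrib_left)
  then show ?thesis
    by (simp add: generator_def qrate_def algebra_simps)
qed

lemma sum_qrate: "(\<Sum>k<Suc (Suc x). qrate lam mu x k) = 0"
  using sum_qrate_mult[of lam mu x "\<lambda>_. 1"] by (simp add: generator_def)

lemma generator_const: "generator lam mu (\<lambda>k. c) x = 0"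
  by (simp add: generator_def algebra_simps)

lemma generator_affine: "generator lam mu (\<lambda>k. a + b * f k) x = b * generator lam mu f x"
  by (simp add: generator_def sum.distrib sum_distrib_left algebra_simps)

lemma generator_diff:
  "generator lam mu (\<lambda>k. f k - g k) x = generator lam mu f x - generator lam mu g x"
  by (simp add: generator_def sum_subtractf algebra_simps)

lemma generator_sum:
  "generator lam mu (\<lambda>k. \<Sum>i\<in>A. f i k) x = (\<Sum>i\<in>A. generator lam mu (f i) x)"
  unfolding sum_qrate_mult[symmetric] sum_distrib_left by (rule sum.swap)

lemma generator_indicator_atLeast:
  "generator lam mu (\<lambda>k. if m \<le> k then 1 else 0) x
     = lam * (if Suc x = m then 1 else 0) - real m * mu * (if m \<le> x then 1 else 0)"
proof -
  have "(\<Sum>k<x. if m \<le> k then 1 else 0 :: real) = real (x - m)"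
    by (induction x) (auto simp: Suc_diff_le)
  then show ?thesis
    by (auto simp: generator_def of_nat_diff algebra_simps)
qed

section \<open>Uniqueness of bounded solutions of the backward equation\<close>

definition bounded_backward_solution :: "real \<Rightarrow> real \<Rightarrow> (real \<Rightarrow> nat \<Rightarrow> real) \<Rightarrow> bool" where
  "bounded_backward_solution lam mu u \<longleftrightarrow>
     (\<forall>x. continuous_on {0..} (\<lambda>t. u t x)) \<and>
     (\<forall>t\<ge>0. \<forall>x. ((\<lambda>s. u s x) has_real_derivative generator lam mu (u t) x) (at_right t)) \<and>
     (\<forall>T. \<exists>C. \<forall>t\<in>{0..T}. \<forall>x. \<bar>u t x\<bar> \<le> C)"

lemma closed_right_continuation:
  fixes S :: "real set"
  assumes "closed S" "a \<in> S" "a \<le> b"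
    and step: "\<And>t. t \<in> S \<Longrightarrow> a \<le> t \<Longrightarrow> t < b \<Longrightarrow> eventually (\<lambda>s. s \<in> S) (at_right t)"
  shows "b \<in> S"
proof (rule ccontr)
  assume "b \<notin> S"
  define s where "s = Sup (S \<inter> {a..b})"
  have "s \<in> S \<inter> {a..b}"
    unfolding s_def using assms by (intro closed_contains_Sup) (auto intro: bdd_aboveI2)
  moreover from calculation \<open>b \<notin> S\<close> have "s \<noteq> b"
    by auto
  ultimately have s: "s \<in> S" "a \<le> s" "s < b"
    by auto
  from step[OF s] obtain e where "e > s" and e: "\<And>y. s < y \<Longrightarrow> y < e \<Longrightarrow> y \<in> S"
    by (auto simp: eventually_at_right_field)
  define y where "y = (s + min e b) / 2"
  have "y \<in> S \<inter> {a..b}"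
    using e[of y] \<open>e > s\<close> s by (auto simp: y_def)
  then have "y \<le> s"
    unfolding s_def by (intro cSup_upper) (auto intro: bdd_aboveI2)
  then show False
    using \<open>e > s\<close> s by (simp add: y_def)
qed

lemma eventually_nonpos_at_right:
  fixes f :: "real \<Rightarrow> real"
  assumes deriv: "(f has_real_derivative D) (at_right t)" and "f t \<le> 0" and "f t = 0 \<Longrightarrow> D < 0"
  shows "eventually (\<lambda>s. f s \<le> 0) (at_right t)"
proof (cases "f t = 0")
  case True
  have "((\<lambda>s. (f s - f t) / (s - t)) \<longlongrightarrow> D) (at_right t)"
    using deriv by (simp add: has_field_derivative_iff)
  then have "eventually (\<lambda>s. (f s - f t) / (s - t) < 0) (at_right t)"
    using True assms(3) by (intro order_tendstoD(2)) auto
  with eventually_at_right_less show ?thesis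
    by eventually_elim (use True in \<open>simp add: divide_less_0_iff\<close>)
next
  case False
  have "(f \<longlongrightarrow> f t) (at_right t)"
    using DERIV_continuous[OF deriv] by (simp add: continuous_within)
  then have "eventually (\<lambda>s. f s < 0) (at_right t)"
    using False assms(2) by (intro order_tendstoD(2)) auto
  then show ?thesis
    by eventually_elim simp
qed

lemma generator_le_at_touching:
  fixes f :: "nat \<Rightarrow> real"
  assumes "lam \<ge> 0" "mu \<ge> 0" "E \<ge> 0"
    and le: "\<And>k. f k \<le> E * 2 ^ k" and eq: "f x = E * 2 ^ x"
  shows "generator lam mu f x \<le> lam * E * 2 ^ x"
proof -
  have "f k \<le> E * 2 ^ x" if "k < x" for k
    using le[of k] mult_left_mono[OF power_increasing[of k x "2::real"] assms(3)] that by simp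
  then have "(\<Sum>k<x. f k) \<le> (\<Sum>k<x. E * 2 ^ x)"
    by (intro sum_mono) simp
  then have "mu * (\<Sum>k<x. f k) \<le> mu * (real x * (E * 2 ^ x))"
    using assms(2) by (simp add: mult_left_mono)
  moreover have "lam * f (Suc x) \<le> lam * (2 * (E * 2 ^ x))"
    using le[of "Suc x"] assms(1) by (simp add: mult_left_mono)
  ultimately show ?thesis
    unfolding generator_def eq by (simp add: algebra_simps)
qed

lemma barrier_eventually_dominates:
  fixes u :: "real \<Rightarrow> nat \<Rightarrow> real"
  assumes "lam \<ge> 0" "mu \<ge> 0" "\<epsilon> > 0"
    and deriv: "((\<lambda>s. u s k) has_real_derivative generator lam mu (u t) k) (at_right t)"
    and le: "\<And>j. u t j \<le> \<epsilon> * exp ((lam + 1) * t) * 2 ^ j"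
  shows "eventually (\<lambda>s. u s k \<le> \<epsilon> * exp ((lam + 1) * s) * 2 ^ k) (at_right t)"
proof -
  define E where "E = \<epsilon> * exp ((lam + 1) * t)"
  have "E > 0"
    using \<open>\<epsilon> > 0\<close> by (simp add: E_def)
  have "eventually (\<lambda>s. u s k - \<epsilon> * exp ((lam + 1) * s) * 2 ^ k \<le> 0) (at_right t)"
  proof (rule eventually_nonpos_at_right)
    show "((\<lambda>s. u s k - \<epsilon> * exp ((lam + 1) * s) * 2 ^ k) has_real_derivative
        generator lam mu (u t) k - (lam + 1) * E * 2 ^ k) (at_right t)"
      unfolding E_def by (auto intro!: derivative_eq_intros deriv simp: algebra_simps)
    show "u t k - \<epsilon> * exp ((lam + 1) * t) * 2 ^ k \<le> 0"
      using le[of k] by simp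
    assume "u t k - \<epsilon> * exp ((lam + 1) * t) * 2 ^ k = 0"
    \<comment> \<open>at a touching state Q u is at most lam times the barrier, which grows at rate lam + 1\<close>
    then have "generator lam mu (u t) k \<le> lam * E * 2 ^ k"
      using le assms(1,2) \<open>E > 0\<close> by (intro generator_le_at_touching) (auto simp: E_def)
    moreover have "(lam + 1) * E * 2 ^ k = lam * E * 2 ^ k + E * 2 ^ k" "E * 2 ^ k > 0"
      using \<open>E > 0\<close> by (simp_all add: algebra_simps)
    ultimately show "generator lam mu (u t) k - (lam + 1) * E * 2 ^ k < 0"
      by linarith
  qed
  then show ?thesis
    by simp
qed

lemma barrier_dominates_large_states:
  fixes u :: "real \<Rightarrow> nat \<Rightarrow> real"
  assumes bound: "\<And>s k. s \<in> {0..t} \<Longrightarrow> \<bar>u s k\<bar> \<le> C" and "\<epsilon> > 0" "K \<ge> 0"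
  obtains X where "\<And>s k. s \<in> {0..t} \<Longrightarrow> X \<le> k \<Longrightarrow> u s k \<le> \<epsilon> * exp (K * s) * 2 ^ k"
proof -
  obtain X :: nat where X: "C / \<epsilon> < real X"
    using reals_Archimedean2 by blast
  have "u s k \<le> \<epsilon> * exp (K * s) * 2 ^ k" if s: "s \<in> {0..t}" and "X \<le> k" for s k
  proof -
    have "real X \<le> real k"
      using \<open>X \<le> k\<close> by simp
    then have "C / \<epsilon> < 2 ^ k"
      using X of_nat_less_two_power[of k, where 'a = real] by linarith
    then have "C \<le> \<epsilon> * 2 ^ k"
      using \<open>\<epsilon> > 0\<close> by (simp add: field_simps)
    also have "\<dots> \<le> \<epsilon> * exp (K * s) * 2 ^ k"
      using s \<open>\<epsilon> > 0\<close> \<open>K \<ge> 0\<close> by simp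
    finally show ?thesis
      using bound[OF s, of k] by simp
  qed
  then show thesis
    by (rule that)
qed

lemma bounded_backward_solution_le_barrier:
  assumes "lam \<ge> 0" "mu \<ge> 0" and sol: "bounded_backward_solution lam mu u"
    and init: "\<And>x. u 0 x \<le> 0" and "\<epsilon> > 0" "t \<ge> 0"
  shows "u t x \<le> \<epsilon> * exp ((lam + 1) * t) * 2 ^ x"
proof -
  define w where "w s k = \<epsilon> * exp ((lam + 1) * s) * 2 ^ k" for s k
  have cont: "\<And>k. continuous_on {0..} (\<lambda>s. u s k)"
    and deriv: "\<And>s k. s \<ge> 0 \<Longrightarrow> ((\<lambda>s. u s k) has_real_derivative generator lam mu (u s) k) (at_right s)"
    and "\<exists>C. \<forall>s\<in>{0..t}. \<forall>k. \<bar>u s k\<bar> \<le> C"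
    using sol by (auto simp: bounded_backward_solution_def)
  then obtain C where C: "\<And>s k. s \<in> {0..t} \<Longrightarrow> \<bar>u s k\<bar> \<le> C"
    by blast
  have "lam + 1 \<ge> 0"
    using assms(1) by simp
  obtain X where tail: "\<And>s k. s \<in> {0..t} \<Longrightarrow> X \<le> k \<Longrightarrow> u s k \<le> w s k"
    using barrier_dominates_large_states[where u = u and K = "lam + 1", OF C \<open>\<epsilon> > 0\<close> \<open>lam + 1 \<ge> 0\<close>]
    unfolding w_def by blast
  define S where "S = {0..t} \<inter> (\<Inter>k<X. {s \<in> {0..}. u s k \<le> w s k})"
  have "closed S"
    unfolding S_def w_def
    by (intro closed_Int closed_INT closed_atLeastAtMost ballI
        continuous_on_closed_Collect_le continuous_intros cont closed_atLeast)
  have "t \<in> S"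
  proof (rule closed_right_continuation[OF \<open>closed S\<close> _ \<open>t \<ge> 0\<close>])
    have "u 0 k \<le> 0" "0 < w 0 k" for k
      using init \<open>\<epsilon> > 0\<close> by (simp_all add: w_def)
    then have "u 0 k \<le> w 0 k" for k
      by (meson order.trans less_imp_le)
    then show "0 \<in> S"
      using \<open>t \<ge> 0\<close> by (simp add: S_def)
    fix s assume s: "s \<in> S" "0 \<le> s" "s < t"
    then have "u s k \<le> w s k" for k
      using tail[of s k] by (cases "k < X") (auto simp: S_def)
    then have "eventually (\<lambda>s'. u s' k \<le> w s' k) (at_right s)" for k
      using barrier_eventually_dominates[OF assms(1,2) \<open>\<epsilon> > 0\<close> deriv[OF s(2)]] by (simp add: w_def)
    then have "eventually (\<lambda>s'. \<forall>k\<in>{..<X}. u s' k \<le> w s' k) (at_right s)"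
      by (intro eventually_ball_finite) auto
    moreover have "eventually (\<lambda>s'. s < s' \<and> s' < t) (at_right s)"
      using s(3) by (auto simp: eventually_at_right_field)
    ultimately show "eventually (\<lambda>s'. s' \<in> S) (at_right s)"
      by eventually_elim (use s(2) in \<open>auto simp: S_def\<close>)
  qed
  then show ?thesis
    using tail[of t x] \<open>t \<ge> 0\<close> by (cases "x < X") (auto simp: S_def w_def)
qed

lemma bounded_backward_solution_nonpos:
  assumes "lam \<ge> 0" "mu \<ge> 0" "bounded_backward_solution lam mu u"
    and "\<And>x. u 0 x \<le> 0" "t \<ge> 0"
  shows "u t x \<le> 0"
proof (rule field_le_epsilon)
  fix e :: real
  assume "e > 0"
  define M where "M = exp ((lam + 1) * t) * 2 ^ x"
  have "M > 0"
    by (simp add: M_def)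
  then have "u t x \<le> e / M * exp ((lam + 1) * t) * 2 ^ x"
    using \<open>e > 0\<close> by (intro bounded_backward_solution_le_barrier[OF assms(1-3)] assms(4,5)) simp
  then show "u t x \<le> 0 + e"
    using \<open>M > 0\<close> by (simp add: M_def)
qed

lemma bounded_backward_solution_diff:
  assumes "bounded_backward_solution lam mu u" "bounded_backward_solution lam mu v"
  shows "bounded_backward_solution lam mu (\<lambda>t x. u t x - v t x)"
  unfolding bounded_backward_solution_def
proof (intro conjI allI impI)
  fix x
  show "continuous_on {0..} (\<lambda>t. u t x - v t x)"
    using assms by (intro continuous_on_diff) (simp_all add: bounded_backward_solution_def)
  fix t :: real
  assume "t \<ge> 0"
  then show "((\<lambda>s. u s x - v s x) has_real_derivative generator lam mu (\<lambda>x. u t x - v t x) x) (at_right t)"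
    using assms unfolding generator_diff by (intro DERIV_diff) (simp_all add: bounded_backward_solution_def)
next
  fix T :: real
  obtain C D where "\<forall>t\<in>{0..T}. \<forall>x. \<bar>u t x\<bar> \<le> C" "\<forall>t\<in>{0..T}. \<forall>x. \<bar>v t x\<bar> \<le> D"
    using assms unfolding bounded_backward_solution_def by meson
  then have "\<forall>t\<in>{0..T}. \<forall>x. \<bar>u t x - v t x\<bar> \<le> C + D"
    by (fastforce intro: order_trans[OF abs_triangle_ineq4] add_mono)
  then show "\<exists>C. \<forall>t\<in>{0..T}. \<forall>x. \<bar>u t x - v t x\<bar> \<le> C" ..
qed

lemma bounded_backward_solution_unique:
  assumes "lam \<ge> 0" "mu \<ge> 0" "bounded_backward_solution lam mu u" "bounded_backward_solution lam mu v"
    and "\<And>x. u 0 x = v 0 x" "t \<ge> 0"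
  shows "u t x = v t x"
proof -
  have "u t x - v t x \<le> 0"
    by (rule bounded_backward_solution_nonpos[OF assms(1,2) bounded_backward_solution_diff[OF assms(3,4)]])
      (simp_all add: assms(5,6))
  moreover have "v t x - u t x \<le> 0"
    by (rule bounded_backward_solution_nonpos[OF assms(1,2) bounded_backward_solution_diff[OF assms(4,3)]])
      (simp_all add: assms(5,6))
  ultimately show ?thesis
    by simp
qed

section \<open>The closed form R*\<close>

\<comment> \<open>the limit of R*_t(delta_x, m) as t tends to infinity\<close>
definition stationary_tail :: "real \<Rightarrow> nat \<Rightarrow> real" where
  "stationary_tail \<theta> m = \<theta> ^ m / pochhammer (\<theta> + 1) m"

definition Rstar_coeff :: "real \<Rightarrow> real \<Rightarrow> nat \<Rightarrow> real \<Rightarrow> nat \<Rightarrow> real" where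
  "Rstar_coeff \<theta> mu n t \<rho> = exp (-(\<theta> + real n) * mu * t) * (\<theta> * (exp (mu * t) - 1)) ^ \<rho> / fact \<rho>"

definition Rstar_basis :: "real \<Rightarrow> nat \<Rightarrow> nat \<Rightarrow> nat \<Rightarrow> real" where
  "Rstar_basis \<theta> n \<rho> x = (if n - \<rho> \<le> x then 1 else 0) - stationary_tail \<theta> (n - \<rho>)"

lemma Rstar_expand:
  "Rstar \<theta> mu t x n = stationary_tail \<theta> n + (\<Sum>\<rho>\<le>n. Rstar_coeff \<theta> mu n t \<rho> * Rstar_basis \<theta> n \<rho> x)"
  unfolding Rstar_def stationary_tail_def Rstar_coeff_def Rstar_basis_def atLeast0AtMost
  by (simp add: sum_distrib_left mult_ac)

lemma stationary_tail_Suc: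
  assumes "\<theta> > 0"
  shows "(\<theta> + real (Suc j)) * stationary_tail \<theta> (Suc j) = \<theta> * stationary_tail \<theta> j"
proof -
  have "pochhammer (\<theta> + 1) j > 0"
    using assms by (intro pochhammer_pos) simp
  moreover have "\<theta> + real (Suc j) > 0"
    using assms by simp
  moreover have "pochhammer (\<theta> + 1) (Suc j) = pochhammer (\<theta> + 1) j * (\<theta> + real (Suc j))"
    by (simp add: pochhammer_Suc algebra_simps)
  ultimately show ?thesis
    by (simp add: stationary_tail_def)
qed

lemma Rstar_coeff_has_derivative:
  "((\<lambda>t. Rstar_coeff \<theta> mu n t \<rho>) has_real_derivative
     mu * (\<theta> * (if \<rho> = 0 then 0 else Rstar_coeff \<theta> mu n t (\<rho> - 1))
           - (\<theta> + real n - real \<rho>) * Rstar_coeff \<theta> mu n t \<rho>)) (at t)"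
proof (cases \<rho>)
  case 0
  then show ?thesis
    unfolding Rstar_coeff_def by (auto intro!: derivative_eq_intros simp: algebra_simps)
next
  case (Suc r)
  define E where "E = exp (-(\<theta> + real n) * mu * t)"
  define b where "b = \<theta> * (exp (mu * t) - 1)"
  have dE: "((\<lambda>t. exp (-(\<theta> + real n) * mu * t)) has_real_derivative -(\<theta> + real n) * mu * E) (at t)"
    unfolding E_def by (auto intro!: derivative_eq_intros)
  \<comment> \<open>writing b' as mu (theta + b) is what closes the recursion between consecutive coefficients\<close>
  have db: "((\<lambda>t. \<theta> * (exp (mu * t) - 1)) has_real_derivative mu * (\<theta> + b)) (at t)"
    unfolding b_def by (auto intro!: derivative_eq_intros simp: algebra_simps)
  have fact_Suc_r: "fact (Suc r) = (1 + real r) * (fact r :: real)"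
    by (simp add: fact_Suc)
  have deriv: "((\<lambda>t. Rstar_coeff \<theta> mu n t (Suc r)) has_real_derivative
      (-(\<theta> + real n) * mu * E * b ^ Suc r + (1 + real r) * (mu * (\<theta> + b) * b ^ r) * E)
        / ((1 + real r) * fact r)) (at t)"
    using DERIV_cdivide[OF DERIV_mult[OF dE DERIV_power_Suc[OF db, of r]], of "fact (Suc r)"]
    unfolding Rstar_coeff_def E_def[symmetric] b_def[symmetric] fact_Suc_r .
  have quotient_eq: "(-(\<theta> + real n) * mu * E * b ^ Suc r + d * (mu * (\<theta> + b) * b ^ r) * E) / (d * F)
      = mu * (\<theta> * (E * b ^ r / F) - (\<theta> + real n - d) * (E * b ^ Suc r / (d * F)))"
    if "d > 0" "F > 0" for d F :: real
    using that by (simp add: field_simps power_Suc)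
  have target: "mu * (\<theta> * (if Suc r = 0 then 0 else Rstar_coeff \<theta> mu n t (Suc r - 1))
        - (\<theta> + real n - real (Suc r)) * Rstar_coeff \<theta> mu n t (Suc r))
      = mu * (\<theta> * (E * b ^ r / fact r) - (\<theta> + real n - (1 + real r)) * (E * b ^ Suc r / ((1 + real r) * fact r)))"
    by (simp add: Rstar_coeff_def E_def b_def fact_Suc_r)
  have "1 + real r > 0"
    by simp
  then show ?thesis
    unfolding Suc target by (rule DERIV_cong[OF deriv quotient_eq[OF _ fact_gt_zero]])
qed

lemma generator_Rstar_basis:
  assumes "\<theta> > 0" "\<rho> \<le> n"
  shows "generator (\<theta> * mu) mu (Rstar_basis \<theta> n \<rho>) x
    = mu * (\<theta> * (if \<rho> < n then Rstar_basis \<theta> n (Suc \<rho>) x else 0)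
            - (\<theta> + real (n - \<rho>)) * Rstar_basis \<theta> n \<rho> x)"
proof -
  have "generator (\<theta> * mu) mu (Rstar_basis \<theta> n \<rho>) x
      = mu * (\<theta> * (if Suc x = n - \<rho> then 1 else 0) - real (n - \<rho>) * (if n - \<rho> \<le> x then 1 else 0))"
    unfolding Rstar_basis_def generator_diff generator_const generator_indicator_atLeast
    by (simp add: algebra_simps)
  also have "\<dots> = mu * (\<theta> * (if \<rho> < n then Rstar_basis \<theta> n (Suc \<rho>) x else 0)
            - (\<theta> + real (n - \<rho>)) * Rstar_basis \<theta> n \<rho> x)"
  proof (cases "\<rho> = n")
    case True
    then show ?thesis
      by (simp add: Rstar_basis_def stationary_tail_def)
  next
    case False
    then obtain j where j: "n - \<rho> = Suc j" "n - Suc \<rho> = j"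
      using assms(2) by (metis Suc_diff_Suc diff_Suc_1 le_neq_implies_less)
    show ?thesis
      using stationary_tail_Suc[OF assms(1), of j] False assms(2)
      unfolding Rstar_basis_def j
      by (cases "Suc j \<le> x"; cases "x = j") (auto simp: algebra_simps)
  qed
  finally show ?thesis .
qed

lemma Rstar_has_derivative:
  assumes "\<theta> > 0"
  shows "((\<lambda>t. Rstar \<theta> mu t x n) has_real_derivative generator (\<theta> * mu) mu (\<lambda>k. Rstar \<theta> mu t k n) x) (at t)"
proof -
  define a where "a \<rho> = Rstar_coeff \<theta> mu n t \<rho>" for \<rho>
  define d where "d \<rho> = Rstar_basis \<theta> n \<rho> x" for \<rho>
  have "((\<lambda>t. Rstar \<theta> mu t x n) has_real_derivative
      (\<Sum>\<rho>\<le>n. mu * (\<theta> * (if \<rho> = 0 then 0 else a (\<rho> - 1)) - (\<theta> + real n - real \<rho>) * a \<rho>) * d \<rho>)) (at t)"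
    unfolding Rstar_expand a_def d_def
    by (auto intro!: derivative_eq_intros Rstar_coeff_has_derivative)
  also have "(\<Sum>\<rho>\<le>n. mu * (\<theta> * (if \<rho> = 0 then 0 else a (\<rho> - 1)) - (\<theta> + real n - real \<rho>) * a \<rho>) * d \<rho>)
      = mu * (\<theta> * (\<Sum>\<rho><n. a \<rho> * d (Suc \<rho>)) - (\<Sum>\<rho>\<le>n. (\<theta> + real (n - \<rho>)) * a \<rho> * d \<rho>))"
    by (simp add: sum.atMost_shift sum.distrib sum_subtractf sum_distrib_left of_nat_diff algebra_simps)
  also have "\<dots> = (\<Sum>\<rho>\<le>n. a \<rho> * (mu * (\<theta> * (if \<rho> < n then d (Suc \<rho>) else 0) - (\<theta> + real (n - \<rho>)) * d \<rho>)))"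
    by (simp add: lessThan_Suc_atMost[symmetric] sum.distrib sum_subtractf sum_distrib_left algebra_simps)
  also have "\<dots> = (\<Sum>\<rho>\<le>n. a \<rho> * generator (\<theta> * mu) mu (Rstar_basis \<theta> n \<rho>) x)"
    by (intro sum.cong refl) (simp add: d_def generator_Rstar_basis[OF assms])
  also have "\<dots> = generator (\<theta> * mu) mu (\<lambda>k. Rstar \<theta> mu t k n) x"
    unfolding Rstar_expand a_def generator_affine[where b = 1, simplified] generator_sum
    by (simp add: generator_affine[where a = 0, simplified])
  finally show ?thesis .
qed

lemma Rstar_at_0: "Rstar \<theta> mu 0 x n = (if n \<le> x then 1 else 0)"
  by (simp add: Rstar_def atLeast0AtMost sum.atMost_shift)

lemma Rstar_bounded:
  assumes "\<theta> > 0" "mu \<ge> 0"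
  shows "\<exists>C. \<forall>t\<in>{0..T}. \<forall>x. \<bar>Rstar \<theta> mu t x n\<bar> \<le> C"
proof -
  define B where "B \<rho> = (\<theta> * (exp (mu * T) - 1)) ^ \<rho> / fact \<rho> * (1 + \<bar>stationary_tail \<theta> (n - \<rho>)\<bar>)" for \<rho>
  have "\<bar>Rstar_coeff \<theta> mu n t \<rho> * Rstar_basis \<theta> n \<rho> x\<bar> \<le> B \<rho>" if "t \<in> {0..T}" for t x \<rho>
  proof -
    have "0 \<le> (\<theta> + real n) * mu * t"
      using that assms by simp
    then have E: "exp (-(\<theta> + real n) * mu * t) \<le> 1"
      by (simp only: mult_minus_left exp_le_one_iff neg_le_0_iff_le)
    have b: "0 \<le> \<theta> * (exp (mu * t) - 1)" "\<theta> * (exp (mu * t) - 1) \<le> \<theta> * (exp (mu * T) - 1)"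
      using that assms by (simp_all add: mult_left_mono)
    have "exp (-(\<theta> + real n) * mu * t) * (\<theta> * (exp (mu * t) - 1)) ^ \<rho>
        \<le> 1 * (\<theta> * (exp (mu * T) - 1)) ^ \<rho>"
      by (rule mult_mono[OF E power_mono[OF b(2) b(1)]]) (simp_all add: b(1))
    then have "\<bar>Rstar_coeff \<theta> mu n t \<rho>\<bar> \<le> (\<theta> * (exp (mu * T) - 1)) ^ \<rho> / fact \<rho>"
      using b(1) by (simp add: Rstar_coeff_def divide_right_mono)
    moreover have "\<bar>Rstar_basis \<theta> n \<rho> x\<bar> \<le> 1 + \<bar>stationary_tail \<theta> (n - \<rho>)\<bar>"
      unfolding Rstar_basis_def by (simp add: abs_le_iff abs_if)
    ultimately show ?thesis
      unfolding B_def abs_mult by (intro mult_mono) auto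
  qed
  then have "\<bar>Rstar \<theta> mu t x n\<bar> \<le> \<bar>stationary_tail \<theta> n\<bar> + (\<Sum>\<rho>\<le>n. B \<rho>)" if "t \<in> {0..T}" for t x
    unfolding Rstar_expand using that
    by (intro order_trans[OF abs_triangle_ineq] add_left_mono order_trans[OF sum_abs] sum_mono) auto
  then show ?thesis
    by blast
qed

lemma bounded_backward_solution_Rstar:
  assumes "\<theta> > 0" "mu \<ge> 0"
  shows "bounded_backward_solution (\<theta> * mu) mu (\<lambda>t x. 1 - Rstar \<theta> mu t x n)"
  unfolding bounded_backward_solution_def
proof (intro conjI allI impI)
  have deriv: "((\<lambda>t. 1 - Rstar \<theta> mu t x n) has_real_derivative
      generator (\<theta> * mu) mu (\<lambda>k. 1 - Rstar \<theta> mu t k n) x) (at t)" for t x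
    using DERIV_diff[OF DERIV_const Rstar_has_derivative[OF assms(1)]]
      generator_affine[where a = 1 and b = "-1"] by simp
  show "continuous_on {0..} (\<lambda>t. 1 - Rstar \<theta> mu t x n)" for x
    using deriv by (intro continuous_at_imp_continuous_on ballI DERIV_isCont) blast
  show "((\<lambda>s. 1 - Rstar \<theta> mu s x n) has_real_derivative
      generator (\<theta> * mu) mu (\<lambda>x. 1 - Rstar \<theta> mu t x n) x) (at_right t)" for t x
    using deriv by (rule has_field_derivative_at_within)
  show "\<exists>C. \<forall>t\<in>{0..T}. \<forall>x. \<bar>1 - Rstar \<theta> mu t x n\<bar> \<le> C" for T
  proof -
    obtain C where "\<forall>t\<in>{0..T}. \<forall>x. \<bar>Rstar \<theta> mu t x n\<bar> \<le> C"
      using Rstar_bounded[OF assms] by blast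
    then have "\<forall>t\<in>{0..T}. \<forall>x. \<bar>1 - Rstar \<theta> mu t x n\<bar> \<le> 1 + C"
      by (fastforce intro: order_trans[OF abs_triangle_ineq4])
    then show ?thesis ..
  qed
qed

section \<open>Transition functions\<close>

context
  fixes P :: "real \<Rightarrow> nat \<Rightarrow> nat \<Rightarrow> real"
  assumes P: "transition_function P"
begin

lemma transition_nonneg: "t \<ge> 0 \<Longrightarrow> 0 \<le> P t x y"
  using P by (simp add: transition_function_def)

lemma transition_summable: "t \<ge> 0 \<Longrightarrow> summable (P t x)"
  using P by (simp add: transition_function_def)

lemma transition_suminf_le_1: "t \<ge> 0 \<Longrightarrow> (\<Sum>y. P t x y) \<le> 1"
  using P by (simp add: transition_function_def)

lemma transition_at_0: "P 0 x y = (if x = y then 1 else 0)"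
  using P by (simp add: transition_function_def)

lemma transition_Chapman_Kolmogorov:
  "s \<ge> 0 \<Longrightarrow> t \<ge> 0 \<Longrightarrow> P (s + t) x y = (\<Sum>k. P s x k * P t k y)"
  using P by (simp add: transition_function_def)

lemma transition_diag_tendsto: "((\<lambda>t. P t x x) \<longlongrightarrow> 1) (at_right 0)"
  using P by (simp add: transition_function_def)

lemma transition_le_1:
  assumes "t \<ge> 0"
  shows "P t x y \<le> 1"
proof -
  have "(\<Sum>y'\<in>{y}. P t x y') \<le> (\<Sum>y'. P t x y')"
    using assms by (intro sum_le_suminf transition_summable transition_nonneg) auto
  then show ?thesis
    using transition_suminf_le_1[OF assms, of x] by simp
qed

lemma summable_transition_weighted:
  assumes "t \<ge> 0" "\<And>k. 0 \<le> \<phi> k" "\<And>k. \<phi> k \<le> 1"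
  shows "summable (\<lambda>k. P t x k * \<phi> k)"
  by (rule summable_comparison_test'[OF transition_summable[OF assms(1), of x], of 0])
    (use assms transition_nonneg in \<open>auto simp: abs_mult intro: mult_left_le\<close>)

lemma transition_weighted_minus_finite:
  assumes "t \<ge> 0" "finite B" "\<And>k. 0 \<le> \<phi> k" "\<And>k. \<phi> k \<le> 1"
  shows "0 \<le> (\<Sum>k. P t x k * \<phi> k) - (\<Sum>k\<in>B. P t x k * \<phi> k)"
    and "(\<Sum>k. P t x k * \<phi> k) - (\<Sum>k\<in>B. P t x k * \<phi> k) \<le> 1 - (\<Sum>k\<in>B. P t x k)"
proof -
  have off_B: "(\<lambda>k. if k \<in> B then 0 else f k) sums ((\<Sum>k. f k) - (\<Sum>k\<in>B. f k))"
    if "summable f" for f :: "nat \<Rightarrow> real"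
    using sums_diff[OF summable_sums[OF that] sums_If_finite_set[OF assms(2), of f]]
    by (simp add: if_distrib[of "\<lambda>a. f _ - a"] cong: if_cong)
  note weighted = off_B[OF summable_transition_weighted[OF assms(1,3,4)]]
  note unweighted = off_B[OF transition_summable[OF assms(1)]]
  show "0 \<le> (\<Sum>k. P t x k * \<phi> k) - (\<Sum>k\<in>B. P t x k * \<phi> k)"
    using assms transition_nonneg by (intro sums_le[OF _ sums_zero weighted]) simp
  have "(\<Sum>k. P t x k * \<phi> k) - (\<Sum>k\<in>B. P t x k * \<phi> k) \<le> (\<Sum>k. P t x k) - (\<Sum>k\<in>B. P t x k)"
    using assms transition_nonneg by (intro sums_le[OF _ weighted unweighted]) (simp add: mult_left_le)
  then show "(\<Sum>k. P t x k * \<phi> k) - (\<Sum>k\<in>B. P t x k * \<phi> k) \<le> 1 - (\<Sum>k\<in>B. P t x k)"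
    using transition_suminf_le_1[OF assms(1), of x] by simp
qed

lemma transition_weighted_near_diag:
  assumes "h \<ge> 0" "\<And>k. 0 \<le> \<phi> k" "\<And>k. \<phi> k \<le> 1"
  shows "\<bar>(\<Sum>k. P h x k * \<phi> k) - \<phi> x\<bar> \<le> 1 - P h x x"
proof -
  have "0 \<le> (\<Sum>k. P h x k * \<phi> k) - P h x x * \<phi> x"
    "(\<Sum>k. P h x k * \<phi> k) - P h x x * \<phi> x \<le> 1 - P h x x"
    using transition_weighted_minus_finite[OF assms(1) _ assms(2,3), of "{x}"] by auto
  moreover have "0 \<le> \<phi> x * (1 - P h x x)" "\<phi> x * (1 - P h x x) \<le> 1 - P h x x"
    using assms transition_le_1[OF assms(1), of x x] by (simp_all add: mult_left_le_one_le)
  moreover have "\<phi> x * (1 - P h x x) = \<phi> x - P h x x * \<phi> x"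
    by (simp add: algebra_simps)
  ultimately show ?thesis
    by linarith
qed

lemma transition_weighted_has_right_derivative:
  assumes Q: "has_qmatrix P q" and "x < N" and conservative: "(\<Sum>k<N. q x k) = 0"
    and \<phi>: "\<And>k. 0 \<le> \<phi> k" "\<And>k. \<phi> k \<le> 1"
  shows "((\<lambda>h. \<Sum>k. P h x k * \<phi> k) has_real_derivative (\<Sum>k<N. q x k * \<phi> k)) (at_right 0)"
proof -
  have dP: "((\<lambda>h. P h x k) has_real_derivative q x k) (at_right 0)" for k
    using Q by (simp add: has_qmatrix_def)
  define g where "g h = (\<Sum>k<N. P h x k * \<phi> k)" for h
  define r where "r h = (\<Sum>k. P h x k * \<phi> k) - g h" for h
  have "(g has_real_derivative (\<Sum>k<N. q x k * \<phi> k)) (at_right 0)"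
    unfolding g_def by (intro DERIV_sum DERIV_cmult_right dP)
  \<comment> \<open>the mass r h outside {..<N} is at most 1 - (SUM k<N. P h x k), whose right derivative
    vanishes because the row of q is conservative\<close>
  moreover have "(r has_real_derivative 0) (at_right 0)"
  proof -
    have "((\<lambda>h. \<Sum>k<N. P h x k) has_real_derivative (\<Sum>k<N. q x k)) (at_right 0)"
      by (intro DERIV_sum dP)
    moreover have "(\<Sum>k<N. P 0 x k) = 1"
      using \<open>x < N\<close> by (simp add: transition_at_0)
    ultimately have upper: "((\<lambda>h. (1 - (\<Sum>k<N. P h x k)) / h) \<longlongrightarrow> 0) (at_right 0)"
      using tendsto_minus
      by (fastforce simp: has_field_derivative_iff minus_divide_left conservative)
    moreover have "r 0 = 0"
    proof -
      have at_0: "(\<lambda>k. P 0 x k * \<phi> k) = (\<lambda>k. if k = x then \<phi> x else 0)"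
        by (auto simp: transition_at_0)
      show ?thesis
        unfolding r_def g_def at_0 using \<open>x < N\<close> sums_single[of x "\<lambda>_. \<phi> x"] by (simp add: sums_iff)
    qed
    moreover have "eventually (\<lambda>h. 0 \<le> r h / h \<and> r h / h \<le> (1 - (\<Sum>k<N. P h x k)) / h) (at_right 0)"
      using transition_weighted_minus_finite[of _ "{..<N}", OF _ _ \<phi>]
      by (auto simp: eventually_at_right_field r_def g_def divide_right_mono intro!: exI[of _ 1])
    then have "((\<lambda>h. r h / h) \<longlongrightarrow> 0) (at_right 0)"
      by (intro tendsto_sandwich[OF _ _ tendsto_const upper]) (auto elim: eventually_mono)
    ultimately show ?thesis
      by (simp add: has_field_derivative_iff)
  qed
  ultimately show ?thesis
    using DERIV_add by (fastforce simp: r_def)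
qed

lemma transition_set_bounds:
  assumes "t \<ge> 0"
  shows "0 \<le> (\<Sum>y\<in>A. P t x y)" and "(\<Sum>y\<in>A. P t x y) \<le> 1"
proof -
  show "0 \<le> (\<Sum>y\<in>A. P t x y)"
    using assms by (simp add: sum_nonneg transition_nonneg)
  show "(\<Sum>y\<in>A. P t x y) \<le> 1"
  proof (cases "finite A")
    case True
    then have "(\<Sum>y\<in>A. P t x y) \<le> (\<Sum>y. P t x y)"
      using assms by (intro sum_le_suminf transition_summable transition_nonneg) auto
    then show ?thesis
      using transition_suminf_le_1[OF assms, of x] by simp
  qed simp
qed

lemma transition_set_Chapman_Kolmogorov:
  assumes "s \<ge> 0" "t \<ge> 0"
  shows "(\<Sum>y\<in>A. P (s + t) x y) = (\<Sum>k. P s x k * (\<Sum>y\<in>A. P t k y))"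
proof -
  have "(\<Sum>y\<in>A. P (s + t) x y) = (\<Sum>y\<in>A. \<Sum>k. P s x k * P t k y)"
    using assms by (simp add: transition_Chapman_Kolmogorov)
  also have "\<dots> = (\<Sum>k. \<Sum>y\<in>A. P s x k * P t k y)"
  proof (rule suminf_sum[symmetric])
    show "summable (\<lambda>k. P s x k * P t k y)" for y
      using assms by (intro summable_transition_weighted) (simp_all add: transition_nonneg transition_le_1)
  qed
  finally show ?thesis
    by (simp add: sum_distrib_left)
qed

lemma transition_set_increment:
  assumes "t \<ge> 0" "h \<ge> 0"
  shows "\<bar>(\<Sum>y\<in>A. P (t + h) x y) - (\<Sum>y\<in>A. P t x y)\<bar> \<le> 1 - P h x x"
  using transition_weighted_near_diag[OF assms(2), of "\<lambda>k. \<Sum>y\<in>A. P t k y" x]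
    transition_set_bounds[OF assms(1)] transition_set_Chapman_Kolmogorov[OF assms(2,1)]
  by (simp add: add.commute)

lemma transition_diag_tendsto_at: "((\<lambda>s. P \<bar>s - t\<bar> x x) \<longlongrightarrow> 1) (at t within S)"
proof -
  have "((\<lambda>s. \<bar>s - t\<bar>) \<longlongrightarrow> 0) (at t within S)"
    by (rule tendsto_rabs_zero) (simp add: LIM_zero_iff tendsto_ident_at)
  moreover have "eventually (\<lambda>s. \<bar>s - t\<bar> \<in> {0<..} \<and> \<bar>s - t\<bar> \<noteq> 0) (at t within S)"
    by (simp add: eventually_at_filter)
  ultimately have "filterlim (\<lambda>s. \<bar>s - t\<bar>) (at_right 0) (at t within S)"
    by (simp add: filterlim_at)
  then show ?thesis
    by (rule filterlim_compose[OF transition_diag_tendsto])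
qed

lemma transition_set_continuous: "continuous_on {0..} (\<lambda>t. \<Sum>y\<in>A. P t x y)"
  unfolding continuous_on_def
proof (intro ballI)
  fix t :: real
  assume "t \<in> {0..}"
  define F where "F s = (\<Sum>y\<in>A. P s x y)" for s
  have "((\<lambda>s. 1 - P \<bar>s - t\<bar> x x) \<longlongrightarrow> 1 - 1) (at t within {0..})"
    by (intro tendsto_diff tendsto_const transition_diag_tendsto_at)
  then have gap: "((\<lambda>s. 1 - P \<bar>s - t\<bar> x x) \<longlongrightarrow> 0) (at t within {0..})"
    by simp
  have "norm (F s - F t) \<le> 1 - P \<bar>s - t\<bar> x x" if "s \<in> {0..}" for s
  proof (cases "t \<le> s")
    case True
    then show ?thesis
      using transition_set_increment[where t = t and h = "s - t" and A = A and x = x] \<open>t \<in> {0..}\<close>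
      by (simp add: F_def)
  next
    case False
    then show ?thesis
      using transition_set_increment[where t = s and h = "t - s" and A = A and x = x] that
      by (simp add: F_def abs_minus_commute)
  qed
  then have "eventually (\<lambda>s. norm (F s - F t) \<le> 1 - P \<bar>s - t\<bar> x x) (at t within {0..})"
    by (simp add: eventually_at_filter)
  from Lim_null_comparison[OF this gap] show "(F \<longlongrightarrow> F t) (at t within {0..})"
    by (simp add: LIM_zero_iff)
qed

lemma transition_set_has_right_derivative:
  assumes "has_qmatrix P q" "x < N" "(\<Sum>k<N. q x k) = 0" "t \<ge> 0"
  shows "((\<lambda>s. \<Sum>y\<in>A. P s x y) has_real_derivative (\<Sum>k<N. q x k * (\<Sum>y\<in>A. P t k y))) (at_right t)"
proof -
  have deriv: "((\<lambda>h. \<Sum>k. P h x k * (\<Sum>y\<in>A. P t k y)) has_real_derivative (\<Sum>k<N. q x k * (\<Sum>y\<in>A. P t k y)))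
      (at_right 0)"
    using assms(4) by (intro transition_weighted_has_right_derivative assms(1-3) transition_set_bounds)
  have ev: "eventually (\<lambda>h. (\<Sum>k. P h x k * (\<Sum>y\<in>A. P t k y)) = (\<Sum>y\<in>A. P (t + h) x y)) (at_right 0)"
    using assms(4) by (auto simp: eventually_at_right_field transition_set_Chapman_Kolmogorov add.commute
        intro!: exI[of _ 1])
  have "(\<Sum>k. P 0 x k * (\<Sum>y\<in>A. P t k y)) = (\<Sum>y\<in>A. P (t + 0) x y)"
    using assms(4) transition_set_Chapman_Kolmogorov[where s = 0 and t = t and A = A and x = x] by simp
  note has_field_derivative_cong_eventually[OF ev this, THEN iffD1, OF deriv]
  moreover have "(+) t ` {0<..} = {t<..}"
    by (auto simp: image_iff intro!: bexI[of _ "_ - t"])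
  ultimately show ?thesis
    using DERIV_at_within_shift[of _ _ t 0 "{0<..}"] by simp
qed

end

lemma bounded_backward_solution_transition_set:
  assumes "transition_function P" "has_qmatrix P (qrate lam mu)"
  shows "bounded_backward_solution lam mu (\<lambda>t x. \<Sum>y\<in>A. P t x y)"
  unfolding bounded_backward_solution_def
proof (intro conjI allI impI)
  show "continuous_on {0..} (\<lambda>t. \<Sum>y\<in>A. P t x y)" for x
    by (rule transition_set_continuous[OF assms(1)])
  show "((\<lambda>s. \<Sum>y\<in>A. P s x y) has_real_derivative generator lam mu (\<lambda>x. \<Sum>y\<in>A. P t x y) x) (at_right t)"
    if "t \<ge> 0" for t x
    using transition_set_has_right_derivative[OF assms _ sum_qrate that] unfolding sum_qrate_mult by simp
  show "\<exists>C. \<forall>t\<in>{0..T}. \<forall>x. \<bar>\<Sum>y\<in>A. P t x y\<bar> \<le> C" for T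
    using transition_set_bounds[OF assms(1)] by (intro exI[of _ 1]) auto
qed

theorem mainTheorem3:
  fixes lam mu :: real and P :: "real \<Rightarrow> nat \<Rightarrow> nat \<Rightarrow> real"
  assumes "lam > 0" and "mu > 0"
    and "transition_function P"
    and "has_qmatrix P (qrate lam mu)"
  shows "\<forall>x y. \<forall>t\<ge>0. P t x y = Rstar (lam / mu) mu t x y - Rstar (lam / mu) mu t x (Suc y)"
proof (intro allI impI)
  fix x y and t :: real
  assume "t \<ge> 0"
  define \<theta> where "\<theta> = lam / mu"
  have "\<theta> > 0" "\<theta> * mu = lam"
    using assms(1,2) by (simp_all add: \<theta>_def)
  have tail: "(\<Sum>y'<n. P t x y') = 1 - Rstar \<theta> mu t x n" for n
  proof (rule bounded_backward_solution_unique[where u = "\<lambda>t x. \<Sum>y'<n. P t x y'"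
        and v = "\<lambda>t x. 1 - Rstar \<theta> mu t x n", OF _ _ _ _ _ \<open>t \<ge> 0\<close>])
    show "bounded_backward_solution lam mu (\<lambda>t x. \<Sum>y'<n. P t x y')"
      by (rule bounded_backward_solution_transition_set[OF assms(3,4)])
    show "bounded_backward_solution lam mu (\<lambda>t x. 1 - Rstar \<theta> mu t x n)"
      using bounded_backward_solution_Rstar[OF \<open>\<theta> > 0\<close>, of mu n] assms(2) \<open>\<theta> * mu = lam\<close> by simp
    show "(\<Sum>y'<n. P 0 x' y') = 1 - Rstar \<theta> mu 0 x' n" for x'
      using transition_at_0[OF assms(3)] by (simp add: Rstar_at_0)
  qed (use assms(1,2) in auto)
  show "P t x y = Rstar (lam / mu) mu t x y - Rstar (lam / mu) mu t x (Suc y)"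
    using tail[of "Suc y"] tail[of y] by (simp add: \<theta>_def)
qed

end
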